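(* $\mathbf{CF_{REG}}=\mathbf{CF}$, where $\mathbf{CF}$ is the family of context-free languages and $\mathbf{CF_{REG}}$ is the family of all languages $L(G,F)$ such that $G=(V,T,P,S)$ is a context-free grammar and $F\subseteq W^*$ is a regular language for some $W\subseteq V$.
   Context: A context-free grammar $G=(V,T,P,S)$ has total alphabet $V$, terminal alphabet $T\subseteq V$, nonterminal alphabet $N=V-T$, finite rule set $P\subseteq N\times V^*$, start symbol $S\in N$; $\phi(G)=\{w\in V^*\mid S\Rightarrow^* w\}$ is its set of sentential forms. For $X\subseteq V$, $\pi_X$ denotes the homomorphism from $V^*$ to $X^*$ with $\pi_X(a)=a$ for $a\in X$ and $\pi_X(a)=\varepsilon$ for $a\in V-X$. For $W\subseteq V$ and $F\subseteq W^*$, set $\phi(G,F)=\{x\in\phi(G)\mid \pi_W(x)\in F\}$ and $L(G,F)=\{\pi_T(y)\mid y\in\phi(G,F),\ \pi_{N-W}(y)=\varepsilon\}$. *)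

theory Defs
  imports Main
begin

definition cfg :: "'s set \<Rightarrow> 's set \<Rightarrow> ('s \<times> 's list) set \<Rightarrow> 's \<Rightarrow> bool" where
  "cfg V T P S \<longleftrightarrow> finite V \<and> T \<subseteq> V \<and> S \<in> V - T \<and> finite P \<and>
     (\<forall>(A, w) \<in> P. A \<in> V - T \<and> set w \<subseteq> V)"

definition derive1 :: "('s \<times> 's list) set \<Rightarrow> 's list \<Rightarrow> 's list \<Rightarrow> bool" where
  "derive1 P u v \<longleftrightarrow> (\<exists>x y A w. (A, w) \<in> P \<and> u = x @ [A] @ y \<and> v = x @ w @ y)"

definition sforms :: "('s \<times> 's list) set \<Rightarrow> 's \<Rightarrow> 's list set" where
  "sforms P S = {w. (derive1 P)\<^sup>*\<^sup>* [S] w}"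

definition proj :: "'s set \<Rightarrow> 's list \<Rightarrow> 's list" where
  "proj X w = filter (\<lambda>a. a \<in> X) w"

definition lang_cfg :: "'s set \<Rightarrow> 's set \<Rightarrow> ('s \<times> 's list) set \<Rightarrow> 's \<Rightarrow> 's list set" where
  "lang_cfg V T P S = {w \<in> sforms P S. set w \<subseteq> T}"

definition phiF :: "('s \<times> 's list) set \<Rightarrow> 's \<Rightarrow> 's set \<Rightarrow> 's list set \<Rightarrow> 's list set" where
  "phiF P S W F = {x \<in> sforms P S. proj W x \<in> F}"

definition LGF :: "'s set \<Rightarrow> 's set \<Rightarrow> ('s \<times> 's list) set \<Rightarrow> 's \<Rightarrow> 's set \<Rightarrow> 's list set \<Rightarrow> 's list set" where
  "LGF V T P S W F = {proj T y | y. y \<in> phiF P S W F \<and> proj ((V - T) - W) y = []}"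

datatype 'a rexp = Zero | One | Atom 'a | Plus "'a rexp" "'a rexp" | Times "'a rexp" "'a rexp" | Star "'a rexp"

definition conc :: "'a list set \<Rightarrow> 'a list set \<Rightarrow> 'a list set" where
  "conc A B = {u @ v | u v. u \<in> A \<and> v \<in> B}"

inductive_set kstar :: "'a list set \<Rightarrow> 'a list set" for A where
  kstar_Nil: "[] \<in> kstar A"
| kstar_app: "u \<in> A \<Longrightarrow> v \<in> kstar A \<Longrightarrow> u @ v \<in> kstar A"

fun rlang :: "'a rexp \<Rightarrow> 'a list set" where
  "rlang Zero = {}"
| "rlang One = {[]}"
| "rlang (Atom a) = {[a]}"
| "rlang (Plus r s) = rlang r \<union> rlang s"
| "rlang (Times r s) = conc (rlang r) (rlang s)"
| "rlang (Star r) = kstar (rlang r)"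

fun atoms :: "'a rexp \<Rightarrow> 'a set" where
  "atoms Zero = {}"
| "atoms One = {}"
| "atoms (Atom a) = {a}"
| "atoms (Plus r s) = atoms r \<union> atoms s"
| "atoms (Times r s) = atoms r \<union> atoms s"
| "atoms (Star r) = atoms r"

text \<open>F is a regular language over the alphabet W (hence F \<subseteq> W^*).\<close>
definition regular_over :: "'s set \<Rightarrow> 's list set \<Rightarrow> bool" where
  "regular_over W F \<longleftrightarrow> (\<exists>r. atoms r \<subseteq> W \<and> rlang r = F)"

text \<open>A language L over 'a is represented by grammars whose symbols have type 'a + nat:
  terminals are (tagged copies of) elements of 'a, and nat supplies an unbounded
  reservoir of further symbols (nonterminals).\<close>

definition CF :: "'a list set set" where
  "CF = {L. \<exists>(V :: ('a + nat) set) T P S. cfg V T P S \<and> T \<subseteq> range Inl \<and>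
             lang_cfg V T P S = map Inl ` L}"

definition CF_REG :: "'a list set set" where
  "CF_REG = {L. \<exists>(V :: ('a + nat) set) T P S W F. cfg V T P S \<and> T \<subseteq> range Inl \<and>
             W \<subseteq> V \<and> regular_over W F \<and> LGF V T P S W F = map Inl ` L}"

end

theory Submission
  imports Defs
begin

text \<open>
  A regular control language F has only finitely many left quotients {v. w @ v \<in> F}, so a
  grammar can run the quotient automaton of F inside its nonterminals: the triple (p, X, q)
  generates the terminal projections of those words y over T \<union> W derivable from X whose
  W-projection leads from the quotient p to the quotient q, i.e. lquot (proj W y) p = q.
  A rule A \<rightarrow> X1 ... Xn becomes (p0, A, pn) \<rightarrow> (p0, X1, p1) ... (pn-1, Xn, pn) for every
  choice of quotients, a symbol of T \<union> W is replaced by its terminal projection, and a new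
  start symbol chooses (F, S, q) with [] \<in> q. This grammar is finite and generates L(G, F).
  Conversely, L(G) = L(G, {[]}) for W = {}.
\<close>

section \<open>Derivation forests\<close>

text \<open>
  This is equivalent to the reflexive transitive closure of derive1 but
  exposes the context-freeness of derivations to rule induction.
\<close>

inductive derives :: "('s \<times> 's list) set \<Rightarrow> 's list \<Rightarrow> 's list \<Rightarrow> bool" for P where
  derives_Nil: "derives P [] []"
| derives_Keep: "derives P xs zs \<Longrightarrow> derives P (X # xs) (X # zs)"
| derives_Rule: "(A, w) \<in> P \<Longrightarrow> derives P w u \<Longrightarrow> derives P xs v \<Longrightarrow> derives P (A # xs) (u @ v)"

inductive_cases derives_NilE: "derives P [] z"
inductive_cases derives_ConsE: "derives P (X # xs) z"

lemma derives_Nil_iff [simp]: "derives P [] z \<longleftrightarrow> z = []"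
  by (auto elim: derives_NilE intro: derives_Nil)

lemma derives_refl: "derives P x x"
  by (induction x) (auto intro: derives.intros)

lemma derives_append: "derives P x z1 \<Longrightarrow> derives P y z2 \<Longrightarrow> derives P (x @ y) (z1 @ z2)"
proof (induction rule: derives.induct)
  case (derives_Rule A w u xs v)
  then show ?case using derives.derives_Rule[of A w P u "xs @ y" "v @ z2"] by simp
qed (simp_all add: derives_Keep)

lemma derives_appendE:
  assumes "derives P (x @ y) z"
  obtains z1 z2 where "z = z1 @ z2" "derives P x z1" "derives P y z2"
  using assms
proof (induction x arbitrary: z thesis)
  case Nil
  then show ?case by (metis append_Nil derives_Nil)
next
  case (Cons X x)
  from \<open>derives P ((X # x) @ y) z\<close> have "derives P (X # (x @ y)) z" by simp
  then show ?case
  proof (rule derives_ConsE)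
    fix zs assume "z = X # zs" "derives P (x @ y) zs"
    then show ?thesis using Cons.IH Cons.prems(1) derives_Keep by (metis append_Cons)
  next
    fix w u v assume "z = u @ v" "(X, w) \<in> P" "derives P w u" "derives P (x @ y) v"
    then show ?thesis using Cons.IH Cons.prems(1) derives_Rule by (metis append_assoc)
  qed
qed

lemma derives_unexpandable:
  assumes "derives P x y" "\<forall>A \<in> set x. \<forall>w. (A, w) \<notin> P"
  shows "y = x"
  using assms by (induction rule: derives.induct) auto

lemma derive1_derives: "derive1 P x y \<Longrightarrow> derives P y z \<Longrightarrow> derives P x z"
proof -
  assume "derive1 P x y" "derives P y z"
  then obtain a b A w where rule: "(A, w) \<in> P" and x: "x = a @ [A] @ b" and y: "y = a @ w @ b"
    unfolding derive1_def by blast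
  from \<open>derives P y z\<close> obtain za zw zb where "z = za @ zw @ zb"
      "derives P a za" "derives P w zw" "derives P b zb"
    unfolding y by (metis derives_appendE)
  moreover have "derives P [A] zw"
    using derives_Rule[OF rule \<open>derives P w zw\<close> derives_Nil] by simp
  ultimately show ?thesis
    unfolding x by (metis derives_append)
qed

lemma derive1_context: "derive1 P x y \<Longrightarrow> derive1 P (a @ x @ b) (a @ y @ b)"
  unfolding derive1_def by (metis append.assoc)

lemma rtranclp_derive1_context:
  "(derive1 P)\<^sup>*\<^sup>* x y \<Longrightarrow> (derive1 P)\<^sup>*\<^sup>* (a @ x @ b) (a @ y @ b)"
  by (induction rule: rtranclp_induct) (auto intro: derive1_context rtranclp.rtrancl_into_rtrancl)

lemma derives_iff_rtranclp: "derives P x y \<longleftrightarrow> (derive1 P)\<^sup>*\<^sup>* x y"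
proof
  show "derives P x y \<Longrightarrow> (derive1 P)\<^sup>*\<^sup>* x y"
  proof (induction rule: derives.induct)
    case (derives_Keep xs zs X)
    then show ?case using rtranclp_derive1_context[of P xs zs "[X]" "[]"] by simp
  next
    case (derives_Rule A w u xs v)
    have "derive1 P (A # xs) (w @ xs)"
      unfolding derive1_def using derives_Rule(1) by (metis append_Cons append_Nil)
    moreover have "(derive1 P)\<^sup>*\<^sup>* (w @ xs) (u @ xs)"
      using rtranclp_derive1_context[OF derives_Rule.IH(1), of "[]" xs] by simp
    moreover have "(derive1 P)\<^sup>*\<^sup>* (u @ xs) (u @ v)"
      using rtranclp_derive1_context[OF derives_Rule.IH(2), of u "[]"] by simp
    ultimately show ?case by (meson converse_rtranclp_into_rtranclp rtranclp_trans)
  qed simp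
  show "(derive1 P)\<^sup>*\<^sup>* x y \<Longrightarrow> derives P x y"
    by (induction rule: converse_rtranclp_induct) (auto intro: derives_refl derive1_derives)
qed

lemma sforms_eq: "sforms P S = {y. derives P [S] y}"
  unfolding sforms_def derives_iff_rtranclp ..

lemma derives_closed:
  assumes "derives P x y" "set x \<subseteq> V" "\<forall>(A, w) \<in> P. set w \<subseteq> V"
  shows "set y \<subseteq> V"
  using assms by (induction rule: derives.induct) fastforce+

lemma cfg_derives_closed: "cfg V T P S \<Longrightarrow> derives P x y \<Longrightarrow> set x \<subseteq> V \<Longrightarrow> set y \<subseteq> V"
  unfolding cfg_def by (rule derives_closed) auto

section \<open>Left quotients of regular languages\<close>

definition lquot :: "'a list \<Rightarrow> 'a list set \<Rightarrow> 'a list set" where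
  "lquot w L = {v. w @ v \<in> L}"

definition lquots :: "'a list set \<Rightarrow> 'a list set set" where
  "lquots L = range (\<lambda>w. lquot w L)"

lemma lquot_Nil [simp]: "lquot [] L = L"
  unfolding lquot_def by simp

lemma lquot_append: "lquot (u @ v) L = lquot v (lquot u L)"
  unfolding lquot_def by simp

lemma Nil_in_lquot_iff [simp]: "[] \<in> lquot w L \<longleftrightarrow> w \<in> L"
  unfolding lquot_def by simp

lemma self_in_lquots: "L \<in> lquots L"
  unfolding lquots_def by (metis lquot_Nil rangeI)

lemma lquot_in_lquots: "p \<in> lquots L \<Longrightarrow> lquot w p \<in> lquots L"
  unfolding lquots_def by (auto simp flip: lquot_append)

lemma finite_lquots_if_finite:
  assumes "finite L"
  shows "finite (lquots L)"
proof -
  have "lquot w L \<subseteq> (\<Union>x \<in> L. (\<lambda>n. drop n x) ` {..length x})" for w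
  proof
    fix v assume "v \<in> lquot w L"
    then have "w @ v \<in> L" unfolding lquot_def by simp
    moreover have "v = drop (length w) (w @ v)" "length w \<in> {..length (w @ v)}" by simp_all
    ultimately show "v \<in> (\<Union>x \<in> L. (\<lambda>n. drop n x) ` {..length x})" by blast
  qed
  then have "lquots L \<subseteq> Pow (\<Union>x \<in> L. (\<lambda>n. drop n x) ` {..length x})"
    unfolding lquots_def by blast
  then show ?thesis
    by (rule finite_subset) (simp add: assms)
qed

lemma lquots_Un: "lquots (A \<union> B) \<subseteq> (\<lambda>(X, Y). X \<union> Y) ` (lquots A \<times> lquots B)"
proof
  fix L assume "L \<in> lquots (A \<union> B)"
  then obtain w where "L = lquot w (A \<union> B)"
    unfolding lquots_def by blast
  then have "L = lquot w A \<union> lquot w B"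
    unfolding lquot_def by blast
  then show "L \<in> (\<lambda>(X, Y). X \<union> Y) ` (lquots A \<times> lquots B)"
    unfolding lquots_def by blast
qed

lemma lquot_conc:
  "lquot w (conc A B) = conc (lquot w A) B \<union> (\<Union>{lquot v B | u v. w = u @ v \<and> u \<in> A})"
proof (intro set_eqI iffI)
  fix z assume "z \<in> lquot w (conc A B)"
  then obtain a b where ab: "w @ z = a @ b" "a \<in> A" "b \<in> B"
    unfolding lquot_def conc_def by blast
  then obtain us where "(w = a @ us \<and> us @ z = b) \<or> (w @ us = a \<and> z = us @ b)"
    by (auto simp: append_eq_append_conv2)
  then show "z \<in> conc (lquot w A) B \<union> (\<Union>{lquot v B | u v. w = u @ v \<and> u \<in> A})"
  proof
    assume "w = a @ us \<and> us @ z = b"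
    with ab have "z \<in> lquot us B" "lquot us B \<in> {lquot v B | u v. w = u @ v \<and> u \<in> A}"
      unfolding lquot_def by blast+
    then show ?thesis by blast
  next
    assume "w @ us = a \<and> z = us @ b"
    with ab show ?thesis
      unfolding lquot_def conc_def by blast
  qed
next
  fix z assume "z \<in> conc (lquot w A) B \<union> (\<Union>{lquot v B | u v. w = u @ v \<and> u \<in> A})"
  then consider z1 z2 where "z = z1 @ z2" "w @ z1 \<in> A" "z2 \<in> B"
    | u v where "w = u @ v" "u \<in> A" "v @ z \<in> B"
    unfolding lquot_def conc_def by blast
  then show "z \<in> lquot w (conc A B)"
  proof cases
    case (1 z1 z2)
    then have "(w @ z1) @ z2 \<in> conc A B" unfolding conc_def by blast
    with 1 show ?thesis unfolding lquot_def by simp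
  next
    case (2 u v)
    then have "u @ (v @ z) \<in> conc A B" unfolding conc_def by blast
    with 2 show ?thesis unfolding lquot_def by simp
  qed
qed

lemma lquots_conc:
  "lquots (conc A B) \<subseteq> (\<lambda>(X, Q). conc X B \<union> \<Union>Q) ` (lquots A \<times> Pow (lquots B))"
proof
  fix L assume "L \<in> lquots (conc A B)"
  then obtain w where L: "L = lquot w (conc A B)"
    unfolding lquots_def by blast
  define Q where "Q = {lquot v B | u v. w = u @ v \<and> u \<in> A}"
  have "L = conc (lquot w A) B \<union> \<Union>Q"
    unfolding L lquot_conc Q_def ..
  moreover have "lquot w A \<in> lquots A" "Q \<in> Pow (lquots B)"
    unfolding lquots_def Q_def by blast+
  ultimately show "L \<in> (\<lambda>(X, Q). conc X B \<union> \<Union>Q) ` (lquots A \<times> Pow (lquots B))"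
    by (intro image_eqI[where x = "(lquot w A, Q)"]) simp_all
qed

lemma kstar_append: "u \<in> kstar A \<Longrightarrow> v \<in> kstar A \<Longrightarrow> u @ v \<in> kstar A"
  by (induction rule: kstar.induct) (simp_all add: kstar.kstar_app)

lemma kstar_append_split:
  assumes "w @ z \<in> kstar A" "z \<noteq> []"
  shows "\<exists>u v z1 z2. w = u @ v \<and> u \<in> kstar A \<and> v @ z1 \<in> A \<and> z2 \<in> kstar A \<and> z = z1 @ z2"
  using assms
proof (induction "w @ z" arbitrary: w rule: kstar.induct)
  case kstar_Nil
  then show ?case by simp
next
  case (kstar_app a y)
  from \<open>a @ y = w @ z\<close> obtain us where "a = w @ us \<and> us @ y = z \<or> a @ us = w \<and> y = us @ z"
    by (auto simp: append_eq_append_conv2)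
  then show ?case
  proof
    assume split: "a = w @ us \<and> us @ y = z"
    have "w = [] @ w" "[] \<in> kstar A" by (simp_all add: kstar.kstar_Nil)
    with split kstar_app.hyps(1,2) show ?thesis by blast
  next
    assume split: "a @ us = w \<and> y = us @ z"
    with kstar_app.hyps(3) \<open>z \<noteq> []\<close> obtain u v z1 z2 where
      "us = u @ v" "u \<in> kstar A" "v @ z1 \<in> A" "z2 \<in> kstar A" "z = z1 @ z2"
      by blast
    moreover have "a @ u \<in> kstar A"
      using kstar_app.hyps(1) \<open>u \<in> kstar A\<close> by (rule kstar.kstar_app)
    ultimately show ?thesis
      using split by (metis append.assoc)
  qed
qed

lemma lquot_kstar:
  "lquot w (kstar A) = (if w \<in> kstar A then {[]} else {})
     \<union> (\<Union>{conc (lquot v A) (kstar A) | u v. w = u @ v \<and> u \<in> kstar A})"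
proof (intro set_eqI iffI)
  fix z assume "z \<in> lquot w (kstar A)"
  then have "w @ z \<in> kstar A" unfolding lquot_def by simp
  show "z \<in> (if w \<in> kstar A then {[]} else {}) \<union> (\<Union>{conc (lquot v A) (kstar A) | u v. w = u @ v \<and> u \<in> kstar A})"
  proof (cases "z = []")
    case False
    with kstar_append_split[OF \<open>w @ z \<in> kstar A\<close>] show ?thesis
      unfolding lquot_def conc_def by blast
  qed (use \<open>w @ z \<in> kstar A\<close> in simp)
next
  fix z assume "z \<in> (if w \<in> kstar A then {[]} else {}) \<union> (\<Union>{conc (lquot v A) (kstar A) | u v. w = u @ v \<and> u \<in> kstar A})"
  then consider "w \<in> kstar A" "z = []"
    | u v z1 z2 where "w = u @ v" "u \<in> kstar A" "v @ z1 \<in> A" "z2 \<in> kstar A" "z = z1 @ z2"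
    unfolding lquot_def conc_def by (auto split: if_splits)
  then show "z \<in> lquot w (kstar A)"
  proof cases
    case (2 u v z1 z2)
    then have "u @ ((v @ z1) @ z2) \<in> kstar A" by (blast intro: kstar_append kstar.kstar_app)
    with 2 show ?thesis unfolding lquot_def by simp
  qed (simp add: lquot_def)
qed

lemma lquots_kstar:
  "lquots (kstar A) \<subseteq> (\<lambda>(Q, b). (if b then {[]} else {}) \<union> (\<Union>X \<in> Q. conc X (kstar A)))
     ` (Pow (lquots A) \<times> UNIV)"
proof
  fix L assume "L \<in> lquots (kstar A)"
  then obtain w where L: "L = lquot w (kstar A)"
    unfolding lquots_def by blast
  define Q where "Q = {lquot v A | u v. w = u @ v \<and> u \<in> kstar A}"
  have "L = (if w \<in> kstar A then {[]} else {}) \<union> (\<Union>X \<in> Q. conc X (kstar A))"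
    unfolding L lquot_kstar Q_def by blast
  moreover have "Q \<in> Pow (lquots A)"
    unfolding lquots_def Q_def by blast
  ultimately show "L \<in> (\<lambda>(Q, b). (if b then {[]} else {}) \<union> (\<Union>X \<in> Q. conc X (kstar A)))
     ` (Pow (lquots A) \<times> UNIV)"
    by (intro image_eqI[where x = "(Q, w \<in> kstar A)"]) simp_all
qed

lemma finite_lquots_rlang: "finite (lquots (rlang r))"
proof (induction r)
  case (Plus r s)
  have "finite ((\<lambda>(X, Y). X \<union> Y) ` (lquots (rlang r) \<times> lquots (rlang s)))"
    using Plus.IH by simp
  then show ?case using finite_subset[OF lquots_Un] by simp
next
  case (Times r s)
  have "finite ((\<lambda>(X, Q). conc X (rlang s) \<union> \<Union>Q) ` (lquots (rlang r) \<times> Pow (lquots (rlang s))))"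
    using Times.IH by simp
  then show ?case using finite_subset[OF lquots_conc] by simp
next
  case (Star r)
  let ?f = "\<lambda>(Q, b). (if b then {[]} else {}) \<union> (\<Union>X \<in> Q. conc X (kstar (rlang r)))"
  have "finite (?f ` (Pow (lquots (rlang r)) \<times> UNIV))"
    using Star.IH by simp
  then show ?case using finite_subset[OF lquots_kstar] by simp
qed (simp_all add: finite_lquots_if_finite)

section \<open>The triple grammar\<close>

lemma proj_append [simp]: "proj W (x @ y) = proj W x @ proj W y"
  unfolding proj_def by simp

lemma proj_Nil_iff: "proj W y = [] \<longleftrightarrow> set y \<inter> W = {}"
  unfolding proj_def filter_empty_conv by blast

lemma proj_id: "set y \<subseteq> T \<Longrightarrow> proj T y = y"
  unfolding proj_def by (simp add: subset_code(1))

lemma lquot_proj_Cons: "lquot (proj W (X # y)) p = lquot (proj W y) (lquot (proj W [X]) p)"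
  by (metis append_Cons append_Nil lquot_append proj_append)

type_synonym 's triple = "'s list set \<times> 's \<times> 's list set"

abbreviation NT :: "'s triple \<Rightarrow> 's + 's triple option" where
  "NT t \<equiv> Inr (Some t)"

fun is_path :: "'q \<Rightarrow> ('q \<times> 's \<times> 'q) list \<Rightarrow> 'q \<Rightarrow> bool" where
  "is_path p [] q \<longleftrightarrow> p = q"
| "is_path p ((p', X, p'') # c) q \<longleftrightarrow> p' = p \<and> is_path p'' c q"

fun labels :: "('q \<times> 's \<times> 'q) list \<Rightarrow> 's list" where
  "labels [] = []"
| "labels ((_, X, _) # c) = X # labels c"

lemma length_labels [simp]: "length (labels c) = length c"
  by (induction c) auto

lemma labels_eq_Nil_iff [simp]: "labels c = [] \<longleftrightarrow> c = []"
  by (cases c rule: labels.cases) auto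

lemma is_path_end_in:
  "is_path p c q \<Longrightarrow> p \<in> Q \<Longrightarrow> set c \<subseteq> Q \<times> V \<times> Q \<Longrightarrow> q \<in> Q"
  by (induction p c q rule: is_path.induct) auto

definition triple_rules :: "'s set \<Rightarrow> 's set \<Rightarrow> ('s \<times> 's list) set \<Rightarrow> 's \<Rightarrow> 's set \<Rightarrow> 's list set
    \<Rightarrow> (('s + 's triple option) \<times> ('s + 's triple option) list) set" where
  "triple_rules V T P S W F =
     {(Inr None, [NT (F, S, q)]) | q. q \<in> lquots F \<and> [] \<in> q}
   \<union> {(NT (p, A, q), map NT c) | p A q c.
        (A, labels c) \<in> P \<and> p \<in> lquots F \<and> is_path p c q \<and> set c \<subseteq> lquots F \<times> V \<times> lquots F}
   \<union> {(NT (p, X, lquot (proj W [X]) p), map Inl (proj T [X])) | p X.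
        X \<in> V \<and> (X \<in> T \<or> X \<in> W) \<and> p \<in> lquots F}"

definition triple_symbols :: "'s set \<Rightarrow> 's set \<Rightarrow> 's list set \<Rightarrow> ('s + 's triple option) set" where
  "triple_symbols V T F = Inl ` T \<union> {Inr None} \<union> NT ` (lquots F \<times> V \<times> lquots F)"

lemma triple_rules_cases:
  assumes "(B, w) \<in> triple_rules V T P S W F"
  obtains (start) q where "B = Inr None" "w = [NT (F, S, q)]" "q \<in> lquots F" "[] \<in> q"
  | (expand) p A q c where "B = NT (p, A, q)" "w = map NT c" "(A, labels c) \<in> P" "p \<in> lquots F"
      "is_path p c q" "set c \<subseteq> lquots F \<times> V \<times> lquots F"
  | (project) p X where "B = NT (p, X, lquot (proj W [X]) p)" "w = map Inl (proj T [X])"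
      "X \<in> V" "X \<in> T \<or> X \<in> W" "p \<in> lquots F"
  using assms unfolding triple_rules_def by blast

lemma triple_rules_startI:
  "q \<in> lquots F \<Longrightarrow> [] \<in> q \<Longrightarrow> (Inr None, [NT (F, S, q)]) \<in> triple_rules V T P S W F"
  unfolding triple_rules_def by blast

lemma triple_rules_expandI:
  "(A, labels c) \<in> P \<Longrightarrow> p \<in> lquots F \<Longrightarrow> is_path p c q \<Longrightarrow> set c \<subseteq> lquots F \<times> V \<times> lquots F
    \<Longrightarrow> (NT (p, A, q), map NT c) \<in> triple_rules V T P S W F"
  unfolding triple_rules_def by blast

lemma triple_rules_projectI:
  "X \<in> V \<Longrightarrow> X \<in> T \<or> X \<in> W \<Longrightarrow> p \<in> lquots F
    \<Longrightarrow> (NT (p, X, lquot (proj W [X]) p), map Inl (proj T [X])) \<in> triple_rules V T P S W F"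
  unfolding triple_rules_def by blast

lemma derives_triple_rules_Inl:
  "derives (triple_rules V T P S W F) (map Inl x) z \<Longrightarrow> z = map Inl x"
  by (rule derives_unexpandable) (auto elim: triple_rules_cases)

lemma finite_bounded_rules:
  assumes "finite V" "\<forall>(A, w) \<in> P. A \<in> V \<and> set w \<subseteq> V \<and> length w \<le> m"
  shows "finite P"
proof (rule finite_subset)
  show "P \<subseteq> V \<times> {w. set w \<subseteq> V \<and> length w \<le> m}"
    using assms(2) by auto
  show "finite (V \<times> {w. set w \<subseteq> V \<and> length w \<le> m})"
    using assms(1) by (simp add: finite_lists_length_le)
qed

lemma cfg_triple_grammar:
  assumes G: "cfg V T P S" and fin: "finite (lquots F)"
  shows "cfg (triple_symbols V T F) (Inl ` T) (triple_rules V T P S W F) (Inr None)"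
proof -
  have "finite V" "finite P" "T \<subseteq> V" "S \<in> V" and PV: "\<forall>(A, w) \<in> P. A \<in> V \<and> set w \<subseteq> V"
    using G unfolding cfg_def by auto
  then obtain m where m: "\<forall>(A, w) \<in> P. length w \<le> m"
    using finite_nat_set_iff_bounded_le[of "length ` snd ` P"] by fastforce
  have rule_in: "B \<in> triple_symbols V T F - Inl ` T \<and> set w \<subseteq> triple_symbols V T F \<and> length w \<le> Suc m"
    if "(B, w) \<in> triple_rules V T P S W F" for B w
    using that
  proof (cases rule: triple_rules_cases)
    case (start q)
    then show ?thesis using \<open>S \<in> V\<close> self_in_lquots[of F] unfolding triple_symbols_def by auto
  next
    case (expand p A q c)
    then have "q \<in> lquots F" "A \<in> V" "length c \<le> m"
      using is_path_end_in PV m by fastforce+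
    with expand show ?thesis unfolding triple_symbols_def by auto
  next
    case (project p X)
    then show ?thesis
      using lquot_in_lquots[OF \<open>p \<in> lquots F\<close>] unfolding triple_symbols_def proj_def by auto
  qed
  have "finite (triple_symbols V T F)"
    unfolding triple_symbols_def using fin \<open>finite V\<close> \<open>T \<subseteq> V\<close> finite_subset by auto
  moreover have "finite (triple_rules V T P S W F)"
    using calculation rule_in by (intro finite_bounded_rules) auto
  ultimately show ?thesis
    using rule_in unfolding cfg_def triple_symbols_def by blast
qed

lemma triple_derives_sound:
  "derives (triple_rules V T P S W F) (map NT c) z \<Longrightarrow> is_path p c q \<Longrightarrow> set z \<subseteq> Inl ` T
    \<Longrightarrow> \<exists>y. derives P (labels c) y \<and> set y \<subseteq> T \<union> W \<and> z = map Inl (proj T y)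
          \<and> lquot (proj W y) p = q"
proof (induction "map NT c" z arbitrary: c p q rule: derives.induct)
  case derives_Nil
  then show ?case by (intro exI[of _ "[]"]) (simp add: proj_def)
next
  case (derives_Keep xs zs X)
  then obtain t where "X = NT t" by (cases c) auto
  with \<open>set (X # zs) \<subseteq> Inl ` T\<close> show ?case by auto
next
  case (derives_Rule B w u xs v)
  from \<open>B # xs = map NT c\<close> \<open>is_path p c q\<close> obtain X b c'
    where c: "c = (p, X, b) # c'" "B = NT (p, X, b)" "xs = map NT c'" "is_path b c' q"
    by (cases c) auto
  from derives_Rule.hyps(5)[OF c(3,4)] \<open>set (u @ v) \<subseteq> Inl ` T\<close> obtain y2
    where y2: "derives P (labels c') y2" "set y2 \<subseteq> T \<union> W" "v = map Inl (proj T y2)"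
      "lquot (proj W y2) b = q"
    by auto
  have "\<exists>y1. derives P [X] y1 \<and> set y1 \<subseteq> T \<union> W \<and> u = map Inl (proj T y1) \<and> lquot (proj W y1) p = b"
    using \<open>(B, w) \<in> triple_rules V T P S W F\<close>
  proof (cases rule: triple_rules_cases)
    case (expand p' A q' c1)
    with c derives_Rule.hyps(3)[of c1 p b] \<open>set (u @ v) \<subseteq> Inl ` T\<close> obtain y
      where "derives P (labels c1) y" "set y \<subseteq> T \<union> W" "u = map Inl (proj T y)" "lquot (proj W y) p = b"
      by auto
    moreover have "derives P [X] y"
      using derives.derives_Rule[OF _ \<open>derives P (labels c1) y\<close> derives_Nil] expand c by simp
    ultimately show ?thesis by blast
  next
    case (project p' X')
    with c have "X' = X" "p' = p" "b = lquot (proj W [X]) p" by auto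
    moreover have "u = w"
      using \<open>derives (triple_rules V T P S W F) w u\<close> project(2) by (simp add: derives_triple_rules_Inl)
    ultimately show ?thesis
      using project by (intro exI[of _ "[X]"]) (auto simp: derives_refl)
  qed (use c in simp)
  then obtain y1 where y1: "derives P [X] y1" "set y1 \<subseteq> T \<union> W" "u = map Inl (proj T y1)"
      "lquot (proj W y1) p = b"
    by blast
  have "derives P (labels c) (y1 @ y2)"
    using c(1) derives_append[OF y1(1) y2(1)] by simp
  with y1 y2 show ?case
    by (intro exI[of _ "y1 @ y2"]) (simp add: lquot_append)
qed

lemma triple_derives_complete:
  assumes "derives P x y" "cfg V T P S" "set x \<subseteq> V" "set y \<subseteq> T \<union> W" "p \<in> lquots F"
  shows "\<exists>c. labels c = x \<and> is_path p c (lquot (proj W y) p) \<and> set c \<subseteq> lquots F \<times> V \<times> lquots F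
    \<and> derives (triple_rules V T P S W F) (map NT c) (map Inl (proj T y))"
  using assms
proof (induction arbitrary: p rule: derives.induct)
  case derives_Nil
  show ?case by (intro exI[of _ "[]"]) (simp add: proj_def)
next
  case (derives_Keep xs zs X)
  let ?r = "lquot (proj W [X]) p"
  have r: "?r \<in> lquots F"
    using derives_Keep.prems(4) by (rule lquot_in_lquots)
  from derives_Keep.IH[of ?r] derives_Keep.prems r obtain c
    where c: "labels c = xs" "is_path ?r c (lquot (proj W zs) ?r)"
      "set c \<subseteq> lquots F \<times> V \<times> lquots F"
      "derives (triple_rules V T P S W F) (map NT c) (map Inl (proj T zs))"
    by auto
  have "(NT (p, X, ?r), map Inl (proj T [X])) \<in> triple_rules V T P S W F"
    using derives_Keep.prems by (intro triple_rules_projectI) auto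
  from derives_Rule[OF this derives_refl c(4)]
  have "derives (triple_rules V T P S W F) (map NT ((p, X, ?r) # c)) (map Inl (proj T (X # zs)))"
    using proj_append[of T "[X]" zs] by simp
  moreover have "is_path p ((p, X, ?r) # c) (lquot (proj W (X # zs)) p)"
    using c(2) by (simp add: lquot_proj_Cons[of W X zs])
  moreover have "set ((p, X, ?r) # c) \<subseteq> lquots F \<times> V \<times> lquots F"
    using c(3) r derives_Keep.prems(2,4) by simp
  ultimately show ?case
    using c(1) by (intro exI[of _ "(p, X, ?r) # c"]) simp
next
  case (derives_Rule A w u xs v)
  let ?r = "lquot (proj W u) p"
  have r: "?r \<in> lquots F"
    using derives_Rule.prems(4) by (rule lquot_in_lquots)
  have "A \<in> V" "set w \<subseteq> V"
    using derives_Rule.hyps(1) \<open>cfg V T P S\<close> unfolding cfg_def by auto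
  with derives_Rule.IH(1)[of p] derives_Rule.prems obtain c1
    where c1: "labels c1 = w" "is_path p c1 ?r" "set c1 \<subseteq> lquots F \<times> V \<times> lquots F"
      "derives (triple_rules V T P S W F) (map NT c1) (map Inl (proj T u))"
    by auto
  from derives_Rule.IH(2)[of ?r] derives_Rule.prems r obtain c2
    where c2: "labels c2 = xs" "is_path ?r c2 (lquot (proj W v) ?r)"
      "set c2 \<subseteq> lquots F \<times> V \<times> lquots F"
      "derives (triple_rules V T P S W F) (map NT c2) (map Inl (proj T v))"
    by auto
  have "(NT (p, A, ?r), map NT c1) \<in> triple_rules V T P S W F"
    using derives_Rule.hyps(1) derives_Rule.prems(4) c1 by (intro triple_rules_expandI) auto
  from derives.derives_Rule[OF this c1(4) c2(4)]
  have "derives (triple_rules V T P S W F) (map NT ((p, A, ?r) # c2)) (map Inl (proj T (u @ v)))"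
    by simp
  moreover have "is_path p ((p, A, ?r) # c2) (lquot (proj W (u @ v)) p)"
    using c2(2) by (simp add: lquot_append)
  moreover have "set ((p, A, ?r) # c2) \<subseteq> lquots F \<times> V \<times> lquots F"
    using c2(3) r \<open>A \<in> V\<close> derives_Rule.prems(4) by simp
  ultimately show ?case
    using c2(1) by (intro exI[of _ "(p, A, ?r) # c2"]) simp
qed

lemma LGF_conv_derives:
  assumes "cfg V T P S"
  shows "LGF V T P S W F = proj T ` {y. derives P [S] y \<and> set y \<subseteq> T \<union> W \<and> proj W y \<in> F}"
proof -
  have "proj (V - T - W) y = [] \<longleftrightarrow> set y \<subseteq> T \<union> W" if "derives P [S] y" for y
  proof -
    have "set y \<subseteq> V"
      using cfg_derives_closed[OF assms that] assms unfolding cfg_def by auto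
    then show ?thesis unfolding proj_Nil_iff by auto
  qed
  then show ?thesis unfolding LGF_def phiF_def sforms_eq by blast
qed

lemma derives_triple_start:
  assumes "set z \<subseteq> Inl ` T"
  shows "derives (triple_rules V T P S W F) [Inr None] z
    \<longleftrightarrow> (\<exists>q. q \<in> lquots F \<and> [] \<in> q \<and> derives (triple_rules V T P S W F) [NT (F, S, q)] z)"
proof
  assume "derives (triple_rules V T P S W F) [Inr None] z"
  then show "\<exists>q. q \<in> lquots F \<and> [] \<in> q \<and> derives (triple_rules V T P S W F) [NT (F, S, q)] z"
  proof (rule derives_ConsE)
    fix zs assume "z = Inr None # zs"
    with assms show ?thesis by auto
  next
    fix w u v assume "z = u @ v" "(Inr None, w) \<in> triple_rules V T P S W F"
      "derives (triple_rules V T P S W F) w u" "derives (triple_rules V T P S W F) [] v"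
    moreover from \<open>(Inr None, w) \<in> triple_rules V T P S W F\<close> obtain q
      where "w = [NT (F, S, q)]" "q \<in> lquots F" "[] \<in> q"
      by (cases rule: triple_rules_cases) simp_all
    ultimately show ?thesis
      by auto
  qed
next
  assume "\<exists>q. q \<in> lquots F \<and> [] \<in> q \<and> derives (triple_rules V T P S W F) [NT (F, S, q)] z"
  then show "derives (triple_rules V T P S W F) [Inr None] z"
    using derives_Rule[OF triple_rules_startI _ derives_Nil] by fastforce
qed

lemma lang_triple_grammar:
  fixes V :: "'s set"
  assumes G: "cfg V T P S"
  shows "lang_cfg (triple_symbols V T F) (Inl ` T) (triple_rules V T P S W F) (Inr None)
    = map Inl ` LGF V T P S W F"
proof (intro set_eqI iffI)
  fix z assume "z \<in> lang_cfg (triple_symbols V T F) (Inl ` T) (triple_rules V T P S W F) (Inr None)"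
  then have zT: "set z \<subseteq> Inl ` T" and "derives (triple_rules V T P S W F) [Inr None] z"
    unfolding lang_cfg_def sforms_eq by auto
  then obtain q where "[] \<in> q" "derives (triple_rules V T P S W F) (map NT [(F, S, q)]) z"
    unfolding derives_triple_start[OF zT] by auto
  with triple_derives_sound[of V T P S W F "[(F, S, q)]" z F q] zT obtain y
    where "derives P [S] y" "set y \<subseteq> T \<union> W" "z = map Inl (proj T y)" "proj W y \<in> F"
    by auto
  then show "z \<in> map Inl ` LGF V T P S W F"
    unfolding LGF_conv_derives[OF G] by blast
next
  fix z :: "('s + 's triple option) list" assume "z \<in> map Inl ` LGF V T P S W F"
  then obtain y where y: "z = map Inl (proj T y)" "derives P [S] y" "set y \<subseteq> T \<union> W" "proj W y \<in> F"
    unfolding LGF_conv_derives[OF G] by auto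
  let ?q = "lquot (proj W y) F"
  have "set [S] \<subseteq> V" using G unfolding cfg_def by simp
  from triple_derives_complete[OF y(2) G this y(3) self_in_lquots] obtain c
    where c: "labels c = [S]" "is_path F c ?q"
      "derives (triple_rules V T P S W F) (map NT c) (map Inl (proj T y))"
    by blast
  then have "c = [(F, S, ?q)]"
    by (cases c rule: labels.cases) auto
  moreover have zT: "set z \<subseteq> Inl ` T"
    using y(1) unfolding proj_def by auto
  ultimately have "derives (triple_rules V T P S W F) [Inr None] z"
    unfolding derives_triple_start[OF zT] using c(3) y(1,4) lquot_in_lquots[OF self_in_lquots]
    by (intro exI[of _ ?q]) simp
  with zT show "z \<in> lang_cfg (triple_symbols V T F) (Inl ` T) (triple_rules V T P S W F) (Inr None)"
    unfolding lang_cfg_def sforms_eq by simp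
qed

section \<open>Renaming symbols\<close>

definition rename_rules :: "('b \<Rightarrow> 'c) \<Rightarrow> ('b \<times> 'b list) set \<Rightarrow> ('c \<times> 'c list) set" where
  "rename_rules h P = (\<lambda>(A, w). (h A, map h w)) ` P"

lemma derives_rename: "derives P x y \<Longrightarrow> derives (rename_rules h P) (map h x) (map h y)"
proof (induction rule: derives.induct)
  case (derives_Rule A w u xs v)
  have "(h A, map h w) \<in> rename_rules h P"
    using derives_Rule.hyps(1) unfolding rename_rules_def by force
  from derives.derives_Rule[OF this derives_Rule.IH] show ?case by simp
qed (simp_all add: derives_Keep)

lemma derives_rename_inv:
  "derives (rename_rules h P) (map h x) z \<Longrightarrow> inj_on h V \<Longrightarrow> set x \<subseteq> V
    \<Longrightarrow> \<forall>(A, w) \<in> P. A \<in> V \<and> set w \<subseteq> V \<Longrightarrow> \<exists>y. z = map h y \<and> derives P x y"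
proof (induction "map h x" z arbitrary: x rule: derives.induct)
  case derives_Nil
  then show ?case by simp
next
  case (derives_Keep xs zs X)
  then obtain Y x' where x: "x = Y # x'" "X = h Y" "xs = map h x'"
    by (cases x) auto
  with derives_Keep.hyps(2)[OF x(3)] derives_Keep.prems obtain y where "zs = map h y" "derives P x' y"
    by auto
  with x show ?case
    by (intro exI[of _ "Y # y"]) (simp add: derives.derives_Keep)
next
  case (derives_Rule B' w' u xs v)
  then obtain A x' where x: "x = A # x'" "B' = h A" "xs = map h x'"
    by (cases x) auto
  from \<open>(B', w') \<in> rename_rules h P\<close> obtain B w where Bw: "(B, w) \<in> P" "B' = h B" "w' = map h w"
    unfolding rename_rules_def by auto
  with derives_Rule.prems x have "A = B" "set w \<subseteq> V"
    by (auto dest: inj_onD)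
  from derives_Rule.hyps(3)[OF Bw(3)] derives_Rule.prems \<open>set w \<subseteq> V\<close> obtain y1
    where "u = map h y1" "derives P w y1"
    by auto
  moreover from derives_Rule.hyps(5)[OF x(3)] derives_Rule.prems x obtain y2
    where "v = map h y2" "derives P x' y2"
    by auto
  ultimately show ?case
    using x Bw \<open>A = B\<close> by (intro exI[of _ "y1 @ y2"]) (simp add: derives.derives_Rule)
qed

lemma cfg_rename:
  assumes "cfg V T P S" "inj_on h V"
  shows "cfg (h ` V) (h ` T) (rename_rules h P) (h S)"
proof -
  have "h A \<notin> h ` T" if "A \<in> V - T" for A
    using assms that unfolding cfg_def by (auto dest: inj_onD)
  with assms show ?thesis
    unfolding cfg_def rename_rules_def by fastforce
qed

lemma lang_cfg_rename:
  assumes G: "cfg V T P S" and inj: "inj_on h V"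
  shows "lang_cfg (h ` V) (h ` T) (rename_rules h P) (h S) = map h ` lang_cfg V T P S"
proof (intro set_eqI iffI)
  fix z assume "z \<in> lang_cfg (h ` V) (h ` T) (rename_rules h P) (h S)"
  then have "derives (rename_rules h P) (map h [S]) z" and zT: "set z \<subseteq> h ` T"
    unfolding lang_cfg_def sforms_eq by auto
  moreover have "set [S] \<subseteq> V" "\<forall>(A, w) \<in> P. A \<in> V \<and> set w \<subseteq> V"
    using G unfolding cfg_def by auto
  ultimately obtain y where y: "z = map h y" "derives P [S] y"
    using derives_rename_inv[of h P "[S]" z V] inj by auto
  have "set y \<subseteq> V" "T \<subseteq> V"
    using cfg_derives_closed[OF G y(2)] G unfolding cfg_def by auto
  have "set y \<subseteq> T"
  proof
    fix s assume "s \<in> set y"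
    with zT y(1) \<open>set y \<subseteq> V\<close> have "h s \<in> h ` T" "s \<in> V" by auto
    then show "s \<in> T" using inj_on_image_mem_iff[OF inj _ \<open>T \<subseteq> V\<close>] by blast
  qed
  with y show "z \<in> map h ` lang_cfg V T P S"
    unfolding lang_cfg_def sforms_eq by auto
next
  fix z assume "z \<in> map h ` lang_cfg V T P S"
  then obtain y where y: "z = map h y" "derives P [S] y" "set y \<subseteq> T"
    unfolding lang_cfg_def sforms_eq by auto
  then have "derives (rename_rules h P) [h S] z" "set z \<subseteq> h ` T"
    using derives_rename[OF y(2), of h] by auto
  then show "z \<in> lang_cfg (h ` V) (h ` T) (rename_rules h P) (h S)"
    unfolding lang_cfg_def sforms_eq by simp
qed

lemma CF_rename:
  fixes h :: "'b \<Rightarrow> 'a + nat"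
  assumes "cfg V T P S" "inj_on h V" "h ` T \<subseteq> range Inl" "map h ` lang_cfg V T P S = map Inl ` L"
  shows "L \<in> CF"
  unfolding CF_def mem_Collect_eq
proof (intro exI conjI)
  show "cfg (h ` V) (h ` T) (rename_rules h P) (h S)"
    using assms(1,2) by (rule cfg_rename)
  show "lang_cfg (h ` V) (h ` T) (rename_rules h P) (h S) = map Inl ` L"
    using lang_cfg_rename[OF assms(1,2)] assms(4) by simp
qed (rule assms(3))

lemma LGF_trivial_control:
  assumes "cfg V T P S"
  shows "LGF V T P S {} {[]} = lang_cfg V T P S"
proof -
  have "{y. derives P [S] y \<and> set y \<subseteq> T \<union> {} \<and> proj {} y \<in> {[]}} = lang_cfg V T P S"
    unfolding lang_cfg_def sforms_eq proj_def by auto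
  moreover have "proj T ` lang_cfg V T P S = lang_cfg V T P S"
    unfolding lang_cfg_def by (rule image_cong[OF refl, where g = id, simplified]) (simp add: proj_id)
  ultimately show ?thesis
    unfolding LGF_conv_derives[OF assms] by simp
qed

lemma CF_subset_CF_REG: "CF \<subseteq> CF_REG"
proof
  fix L :: "'a list set" assume "L \<in> CF"
  then obtain V :: "('a + nat) set" and T P S
    where G: "cfg V T P S" "T \<subseteq> range Inl" "lang_cfg V T P S = map Inl ` L"
    unfolding CF_def by blast
  have "LGF V T P S {} {[]} = map Inl ` L"
    using G(3) by (simp add: LGF_trivial_control[OF G(1)])
  moreover have "regular_over {} {[]}"
    unfolding regular_over_def by (intro exI[of _ One]) simp
  ultimately show "L \<in> CF_REG"
    unfolding CF_REG_def using G(1,2) by blast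
qed

lemma CF_REG_subset_CF: "CF_REG \<subseteq> CF"
proof
  fix L :: "'a list set" assume "L \<in> CF_REG"
  then obtain V :: "('a + nat) set" and T P S W F
    where G: "cfg V T P S" "T \<subseteq> range Inl" "regular_over W F" "LGF V T P S W F = map Inl ` L"
    unfolding CF_REG_def by auto
  from \<open>regular_over W F\<close> obtain r where "rlang r = F"
    unfolding regular_over_def by blast
  then have "finite (lquots F)"
    using finite_lquots_rlang[of r] by simp
  with G(1) have G': "cfg (triple_symbols V T F) (Inl ` T) (triple_rules V T P S W F) (Inr None)"
    by (rule cfg_triple_grammar)
  then have "finite (triple_symbols V T F)"
    unfolding cfg_def by blast
  then obtain enc :: "_ \<Rightarrow> nat" where enc: "inj_on enc (triple_symbols V T F)"
    using finite_imp_inj_to_nat_seg by blast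
  define h :: "('a + nat) + ('a + nat) triple option \<Rightarrow> 'a + nat"
    where "h x = (case x of Inl (Inl a) \<Rightarrow> Inl a | _ \<Rightarrow> Inr (enc x))" for x
  have "inj_on h (triple_symbols V T F)"
  proof (rule inj_onI)
    fix x y assume "x \<in> triple_symbols V T F" "y \<in> triple_symbols V T F" "h x = h y"
    with enc show "x = y"
      unfolding h_def by (auto split: sum.splits dest: inj_onD)
  qed
  moreover have "h ` Inl ` T \<subseteq> range Inl"
    using G(2) by (auto simp: h_def)
  moreover have "h \<circ> (Inl \<circ> Inl) = Inl"
    by (auto simp: h_def)
  then have "map h ` lang_cfg (triple_symbols V T F) (Inl ` T) (triple_rules V T P S W F) (Inr None)
      = map Inl ` L"
    unfolding lang_triple_grammar[OF G(1)] G(4) image_image map_map by simp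
  ultimately show "L \<in> CF"
    by (rule CF_rename[OF G'])
qed

theorem theorem1:
  shows "(CF_REG :: 'a list set set) = CF"
  using CF_REG_subset_CF CF_subset_CF_REG by (rule equalityI)

end
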